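(* Let $(X,d,\kappa)$ be a digital metric space, where $d$ is any $\ell_p$ metric, and let $f,g: X \to X$. Then $f$ is $g$-intimate if and only if for every sequence $\{x_n\}_{n=1}^\infty \subset X$ such that $\lim_{n\to\infty} f(x_n) = \lim_{n\to\infty} g(x_n) = t$ for some $t \in X$, we have, for $n$ sufficiently large, $d(g(t),t) \le d(f(t),t)$.
   Context: A digital metric space is a triple $(X,d,\kappa)$ with $X\subset\mathbb{Z}^n$, $\kappa$ an adjacency relation on $X$, and $d$ a metric on $X$. The $\ell_p$ metric ($1\le p\le\infty$) is $d(x,y) = (\sum_i |x_i-y_i|^p)^{1/p}$ for $p<\infty$ and $\max_i|x_i-y_i|$ for $p=\infty$. Limits are taken with respect to $d$. Let $\alpha$ denote either the $\liminf_{n\to\infty}$ or the $\limsup_{n\to\infty}$ operation. For $f,g: X\to X$, $f$ is $g$-intimate if for every sequence $\{x_n\} \subset X$ with $\lim_{n\to\infty} f(x_n) = \lim_{n\to\infty} g(x_n) = t$ for some $t\in X$ we have (in the paper's wording, "for $n$ sufficiently large") $\alpha\, d(g(f(x_n)), g(x_n)) \le \alpha\, d(f(f(x_n)), f(x_n))$. *)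

theory Defs
  imports "HOL-Analysis.Analysis"
begin

definition lp_dist :: "ereal \<Rightarrow> int ^ 'n \<Rightarrow> int ^ 'n \<Rightarrow> real" where
  "lp_dist p x y =
     (if p = \<infinity> then Max (range (\<lambda>i. real_of_int \<bar>x $ i - y $ i\<bar>))
      else (\<Sum>i\<in>UNIV. real_of_int \<bar>x $ i - y $ i\<bar> powr real_of_ereal p)
             powr (1 / real_of_ereal p))"

definition conv_wrt :: "('a \<Rightarrow> 'a \<Rightarrow> real) \<Rightarrow> (nat \<Rightarrow> 'a) \<Rightarrow> 'a \<Rightarrow> bool" where
  "conv_wrt d s t \<longleftrightarrow> (\<forall>e>0. \<exists>N. \<forall>n\<ge>N. d (s n) t < e)"

definition alpha_op :: "bool \<Rightarrow> (nat \<Rightarrow> real) \<Rightarrow> ereal" where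
  "alpha_op use_liminf u =
     (if use_liminf then liminf (\<lambda>n. ereal (u n)) else limsup (\<lambda>n. ereal (u n)))"

definition g_intimate ::
  "bool \<Rightarrow> ('a \<Rightarrow> 'a \<Rightarrow> real) \<Rightarrow> 'a set \<Rightarrow> ('a \<Rightarrow> 'a) \<Rightarrow> ('a \<Rightarrow> 'a) \<Rightarrow> bool" where
  "g_intimate use_liminf d X f g \<longleftrightarrow>
     (\<forall>s t. (\<forall>n. s n \<in> X) \<and> t \<in> X \<and>
            conv_wrt d (\<lambda>n. f (s n)) t \<and> conv_wrt d (\<lambda>n. g (s n)) t \<longrightarrow>
            alpha_op use_liminf (\<lambda>n. d (g (f (s n))) (g (s n)))
              \<le> alpha_op use_liminf (\<lambda>n. d (f (f (s n))) (f (s n))))"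

end

theory Submission
  imports Defs
begin

text \<open>Distinct points of the integer lattice are at \<open>\<ell>\<^sub>p\<close> distance at least 1, so a
  sequence converging in such a metric is eventually equal to its limit. Hence along
  every sequence considered in the definition of \<open>g\<close>-intimacy, both distance sequences
  are eventually constant, equal to \<open>d(g t, t)\<close> and \<open>d(f t, t)\<close>, and liminf and limsup
  of an eventually constant sequence are that constant.\<close>

lemma lp_dist_coordinate_le:
  fixes x y :: "int ^ 'n"
  assumes "p \<ge> 1"
  shows "real_of_int \<bar>x $ i - y $ i\<bar> \<le> lp_dist p x y"
proof (cases "p = \<infinity>")
  case True
  then show ?thesis
    unfolding lp_dist_def by (simp del: of_int_abs of_int_diff)
next
  case False
  define q where "q = real_of_ereal p"
  have "p = ereal q" using assms False unfolding q_def by (cases p) auto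
  then have "q \<ge> 1" using assms by simp
  define a where "a j = real_of_int \<bar>x $ j - y $ j\<bar>" for j
  have "a i = (a i powr q) powr (1 / q)"
    using \<open>q \<ge> 1\<close> by (simp add: a_def powr_powr)
  also have "\<dots> \<le> (\<Sum>j\<in>UNIV. a j powr q) powr (1 / q)"
    using \<open>q \<ge> 1\<close> by (intro powr_mono2 member_le_sum) auto
  also have "\<dots> = lp_dist p x y"
    using False unfolding lp_dist_def a_def q_def by simp
  finally show ?thesis unfolding a_def .
qed

lemma lp_dist_ge_one:
  fixes x y :: "int ^ 'n"
  assumes "p \<ge> 1" and "x \<noteq> y"
  shows "lp_dist p x y \<ge> 1"
proof -
  obtain i where "x $ i \<noteq> y $ i" using \<open>x \<noteq> y\<close> by (metis vec_eq_iff)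
  then have "1 \<le> real_of_int \<bar>x $ i - y $ i\<bar>" by linarith
  also have "\<dots> \<le> lp_dist p x y" by (rule lp_dist_coordinate_le[OF \<open>p \<ge> 1\<close>])
  finally show ?thesis .
qed

lemma conv_wrt_discrete_imp_eventually_eq:
  assumes "\<delta> > 0" and discrete: "\<And>x y. x \<noteq> y \<Longrightarrow> d x y \<ge> \<delta>"
    and "conv_wrt d s t"
  shows "\<forall>\<^sub>F n in sequentially. s n = t"
proof -
  obtain N where "\<forall>n\<ge>N. d (s n) t < \<delta>"
    using \<open>conv_wrt d s t\<close> \<open>\<delta> > 0\<close> unfolding conv_wrt_def by blast
  then show ?thesis
    unfolding eventually_sequentially by (meson discrete not_le)
qed

lemma conv_wrt_lp_dist_imp_eventually_eq:
  assumes "p \<ge> 1" and "conv_wrt (lp_dist p) s t"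
  shows "\<forall>\<^sub>F n in sequentially. s n = t"
  using conv_wrt_discrete_imp_eventually_eq[of 1 "lp_dist p"] lp_dist_ge_one[OF \<open>p \<ge> 1\<close>] assms(2)
  by auto

lemma alpha_op_eventually_const:
  assumes "\<forall>\<^sub>F n in sequentially. u n = c"
  shows "alpha_op use_liminf u = ereal c"
proof -
  have "((\<lambda>n. ereal (u n)) \<longlongrightarrow> ereal c) sequentially"
    using assms by (intro tendsto_eventually) (auto elim: eventually_mono)
  then show ?thesis
    unfolding alpha_op_def by (simp add: lim_imp_Liminf lim_imp_Limsup)
qed

theorem mainTheorem10:
  fixes X :: "(int ^ 'n) set" and kappa :: "int ^ 'n \<Rightarrow> int ^ 'n \<Rightarrow> bool"
    and p :: ereal and f g :: "int ^ 'n \<Rightarrow> int ^ 'n" and use_liminf :: bool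
  assumes "p \<ge> 1"
    and "f ` X \<subseteq> X" and "g ` X \<subseteq> X"
  shows "g_intimate use_liminf (lp_dist p) X f g \<longleftrightarrow>
    (\<forall>s t. (\<forall>n. s n \<in> X) \<and> t \<in> X \<and>
           conv_wrt (lp_dist p) (\<lambda>n. f (s n)) t \<and> conv_wrt (lp_dist p) (\<lambda>n. g (s n)) t \<longrightarrow>
           (\<forall>\<^sub>F n in sequentially. lp_dist p (g t) t \<le> lp_dist p (f t) t))"
proof -
  have "alpha_op use_liminf (\<lambda>n. lp_dist p (g (f (s n))) (g (s n)))
          \<le> alpha_op use_liminf (\<lambda>n. lp_dist p (f (f (s n))) (f (s n)))
        \<longleftrightarrow> (\<forall>\<^sub>F n in sequentially. lp_dist p (g t) t \<le> lp_dist p (f t) t)"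
    if "conv_wrt (lp_dist p) (\<lambda>n. f (s n)) t" and "conv_wrt (lp_dist p) (\<lambda>n. g (s n)) t"
    for s t
  proof -
    have f_eq: "\<forall>\<^sub>F n in sequentially. f (s n) = t"
      and g_eq: "\<forall>\<^sub>F n in sequentially. g (s n) = t"
      using that conv_wrt_lp_dist_imp_eventually_eq[OF \<open>p \<ge> 1\<close>] by blast+
    have "alpha_op use_liminf (\<lambda>n. lp_dist p (g (f (s n))) (g (s n))) = lp_dist p (g t) t"
      using eventually_conj[OF f_eq g_eq]
      by (intro alpha_op_eventually_const) (auto elim: eventually_mono)
    moreover have "alpha_op use_liminf (\<lambda>n. lp_dist p (f (f (s n))) (f (s n))) = lp_dist p (f t) t"
      using f_eq by (intro alpha_op_eventually_const) (auto elim: eventually_mono)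
    ultimately show ?thesis by simp
  qed
  then show ?thesis unfolding g_intimate_def by blast
qed

end
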